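(* In the single-node mining process with $\phi(s)=s^a$, the expected total number of hash attempts needed for the node to build a block-chain of length $L\ge1$ is at most $$\frac{D_s}{R^a}\sum_{n=0}^{L-1}\frac{1}{(n+1)^a}.$$
   Context: Fix real parameters $M>0$ (scale of the system), $R>0$ (the stake reward StakRwd), $0<D_c\le D_s$ (coin-issue difficulty constant CoinD and stake-issue difficulty constant StakD), and $0<a<1$. Put $p=D_c/D_s$, $q=1-p$. Single-node mining process with threshold function $\phi$: a node, who makes no stake transactions with anybody, starts with stake $S_0=0$. For $n=0,1,2,\dots$ the $(n+1)$-th block is produced as follows: the node makes successive hash attempts, each producing a hash value uniformly distributed on $[0,M]$, independent of all previous randomness; the block is created at the first attempt whose hash $h$ satisfies $h\le M\phi(R+S_n)/D_c$ (the coin-issue threshold), and then $S_{n+1}=S_n+R$ if moreover $h\le M\phi(R+S_n)/D_s$ (the stake-issue threshold), otherwise $S_{n+1}=S_n$. Assume $0<\phi(R+S)\le D_c$ for all $S\in\{0,R,2R,\dots,(L-1)R\}$. Time is measured as the total number of hash attempts. In this statement $\phi(s)=s^a$ (radical stake system with equal exponent $a$). *)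

theory Defs
  imports "HOL-Probability.Probability"
begin

definition hash_space :: "real \<Rightarrow> real stream measure" where
  "hash_space M = stream_space (uniform_measure lborel {0..M})"

text \<open>State (number of blocks produced so far, current stake) after t hash attempts,
  for the single-node mining process with threshold function phi, scale M,
  stake reward R, difficulty constants Dc (coin issue) and Ds (stake issue).\<close>
fun mine_state ::
  "real \<Rightarrow> real \<Rightarrow> real \<Rightarrow> real \<Rightarrow> (real \<Rightarrow> real) \<Rightarrow> real stream \<Rightarrow> nat \<Rightarrow> nat \<times> real" where
  "mine_state M R Dc Ds phi w 0 = (0, 0)"
| "mine_state M R Dc Ds phi w (Suc t) =
     (let st = mine_state M R Dc Ds phi w t; n = fst st; S = snd st; h = w !! t in
      if h \<le> M * phi (R + S) / Dc
      then (Suc n, if h \<le> M * phi (R + S) / Ds then S + R else S)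
      else (n, S))"

text \<open>Total number of hash attempts needed to build a chain of length L
  (the number of attempts made while fewer than L blocks exist; infinite if never reached).\<close>
definition mining_time ::
  "real \<Rightarrow> real \<Rightarrow> real \<Rightarrow> real \<Rightarrow> (real \<Rightarrow> real) \<Rightarrow> nat \<Rightarrow> real stream \<Rightarrow> ennreal" where
  "mining_time M R Dc Ds phi L w =
     (\<integral>\<^sup>+ t. (if fst (mine_state M R Dc Ds phi w t) < L then 1 else 0) \<partial>count_space (UNIV :: nat set))"

end

theory Submission
  imports Defs
begin

text \<open>In state (n, j) the node has n blocks, j of which issued a stake, so its stake is jR
  and the next block takes D_c / (R(j+1))^a attempts in expectation. After m further blocks
  the stake count is j + X with X binomial(m, p), p = D_c/D_s, so the remaining expected time
  is (D_c/R^a) \<Sum> E[(j+1+X)^(-a)], and by concavity of t \<mapsto> t^a each term is at most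
  E[1/(j+1+X)]^a. These bounds form a potential that decreases in expectation by at least one
  per attempt, so it dominates the expected number of attempts. Starting from j = 0,
  E[1/(1+X)] \<le> 1/(p(m+1)), and (1/p)^a \<le> 1/p turns D_c/(R^a p) into D_s/R^a.\<close>

definition binomial_recip_mean :: "real \<Rightarrow> nat \<Rightarrow> nat \<Rightarrow> real" where
  "binomial_recip_mean p m j =
     (\<Sum>k\<le>m. real (m choose k) * p^k * (1-p)^(m-k) / (real j + real k + 1))"

lemma binomial_recip_mean_0 [simp]: "binomial_recip_mean p 0 j = 1 / (real j + 1)"
  by (simp add: binomial_recip_mean_def)

lemma binomial_recip_mean_nonneg: "0 \<le> p \<Longrightarrow> p \<le> 1 \<Longrightarrow> 0 \<le> binomial_recip_mean p m j"
  unfolding binomial_recip_mean_def by (intro sum_nonneg) auto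

lemma binomial_recip_mean_Suc:
  "binomial_recip_mean p (Suc m) j =
     p * binomial_recip_mean p m (Suc j) + (1-p) * binomial_recip_mean p m j"
proof -
  define q where "q = 1 - p"
  define g where "g k = real (m choose k) * p^k * q^(Suc m - k) / (real j + real k + 1)" for k
  define S where "S = (\<Sum>k\<le>m. real (m choose Suc k) * p^Suc k * q^(m-k) / (real j + real k + 2))"
  define S' where "S' = (\<Sum>k\<le>m. real (m choose k) * p^Suc k * q^(m-k) / (real j + real k + 2))"
  have split: "binomial_recip_mean p (Suc m) j = q^(Suc m) / (real j + 1) + S' + S"
  proof -
    have "binomial_recip_mean p (Suc m) j =
        (\<Sum>k\<le>Suc m. real (Suc m choose k) * p^k * q^(Suc m-k) / (real j + real k + 1))"
      by (simp add: binomial_recip_mean_def q_def)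
    also have "\<dots> = q^(Suc m) / (real j + 1) +
        (\<Sum>k\<le>m. real (Suc m choose Suc k) * p^Suc k * q^(m-k) / (real j + real k + 2))"
      by (subst sum.atMost_Suc_shift) (simp add: add_ac)
    also have "\<dots> = q^(Suc m) / (real j + 1) + S' + S"
      by (simp add: S_def S'_def sum.distrib[symmetric] add_divide_distrib[symmetric] distrib_right)
    finally show ?thesis .
  qed
  have "S' = p * binomial_recip_mean p m (Suc j)"
    unfolding S'_def binomial_recip_mean_def sum_distrib_left q_def
    by (intro sum.cong refl) (simp add: add_ac mult_ac)
  moreover have "q^(Suc m) / (real j + 1) + S = q * binomial_recip_mean p m j"
  proof -
    have "q^(Suc m) / (real j + 1) + S = (\<Sum>k\<le>Suc m. g k)"
      by (subst sum.atMost_Suc_shift) (simp add: g_def S_def add_ac)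
    also have "\<dots> = (\<Sum>k\<le>m. g k)"
      by (simp add: g_def)
    also have "\<dots> = q * binomial_recip_mean p m j"
      unfolding binomial_recip_mean_def sum_distrib_left q_def[symmetric] g_def
      by (intro sum.cong refl) (simp add: Suc_diff_le)
    finally show ?thesis .
  qed
  ultimately show ?thesis using split by (simp add: q_def)
qed

text \<open>Multiplying by (m+1)p and using (m+1) (m choose k) = (k+1) (m+1 choose k+1) turns the sum
  into the binomial expansion of (p + q)^(m+1) without its k = 0 term.\<close>
lemma binomial_recip_mean_le:
  assumes "0 < p" "p \<le> 1"
  shows "binomial_recip_mean p m 0 \<le> 1 / (p * (real m + 1))"
proof -
  define q where "q = 1 - p"
  have "real (Suc m) * p * binomial_recip_mean p m 0 =
      (\<Sum>k\<le>m. real (Suc m choose Suc k) * p^Suc k * q^(m-k))"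
    unfolding binomial_recip_mean_def sum_distrib_left q_def[symmetric]
  proof (intro sum.cong refl)
    fix k
    have e: "real (Suc m) * real (m choose k) = real (Suc m choose Suc k) * real (Suc k)"
      using Suc_times_binomial_eq[of m k] by (metis of_nat_mult)
    have "real (Suc m) * p * (real (m choose k) * p ^ k * q ^ (m - k) / (real 0 + real k + 1))
        = (real (Suc m) * real (m choose k)) * p^Suc k * q^(m-k) / real (Suc k)"
      by (simp add: field_simps)
    also have "\<dots> = real (Suc m choose Suc k) * p^Suc k * q^(m-k)"
      by (subst e) (simp add: field_simps del: of_nat_Suc)
    finally show "real (Suc m) * p * (real (m choose k) * p ^ k * q ^ (m - k) / (real 0 + real k + 1))
        = real (Suc m choose Suc k) * p ^ Suc k * q ^ (m - k)" .
  qed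
  also have "\<dots> \<le> q^(Suc m) + (\<Sum>k\<le>m. real (Suc m choose Suc k) * p^Suc k * q^(m-k))"
    using assms by (simp add: q_def)
  also have "\<dots> = (\<Sum>k\<le>Suc m. real (Suc m choose k) * p^k * q^(Suc m-k))"
    by (subst sum.atMost_Suc_shift) simp
  also have "\<dots> = (p + q)^Suc m"
    by (rule binomial_ring[symmetric])
  also have "\<dots> = 1" by (simp add: q_def)
  finally have "binomial_recip_mean p m 0 * (p * (real m + 1)) \<le> 1"
    by (simp add: algebra_simps)
  then show ?thesis using assms by (subst pos_le_divide_eq) auto
qed

lemma powr_le_tangent:
  fixes t a :: real
  assumes "0 \<le> t" "0 < a" "a < 1"
  shows "t powr a \<le> a * t + (1 - a)"
proof (cases "t = 0")
  case True then show ?thesis using assms by simp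
next
  case False
  then have "t powr a * 1 powr (1-a) \<le> a * t + (1-a) * 1"
    using assms by (intro Youngs_inequality_0) auto
  then show ?thesis by simp
qed

lemma convex_comb_powr_le:
  fixes x y p a :: real
  assumes "0 \<le> x" "0 \<le> y" "0 \<le> p" "p \<le> 1" "0 < a" "a < 1"
  shows "p * x powr a + (1-p) * y powr a \<le> (p*x + (1-p)*y) powr a"
proof (cases "p*x + (1-p)*y = 0")
  case True
  then have "p * x = 0" "(1-p)*y = 0" using assms
    by (smt (verit) mult_nonneg_nonneg)+
  then show ?thesis using assms by auto
next
  case False
  define z where "z = p*x + (1-p)*y"
  have z: "z > 0" using False assms unfolding z_def
    by (smt (verit) mult_nonneg_nonneg)
  have "p * x powr a + (1-p) * y powr a = z powr a * (p * (x/z) powr a + (1-p) * (y/z) powr a)"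
    using z assms by (simp add: powr_divide field_simps)
  also have "\<dots> \<le> z powr a * (p * (a * (x/z) + (1-a)) + (1-p) * (a * (y/z) + (1-a)))"
    using assms z by (intro mult_left_mono add_mono powr_le_tangent) auto
  also have "p * (a * (x/z) + (1-a)) + (1-p) * (a * (y/z) + (1-a)) = a * ((p*x + (1-p)*y)/z) + (1-a)"
    using z by (simp add: field_simps)
  also have "\<dots> = 1" using z by (simp add: z_def[symmetric])
  finally show ?thesis by (simp add: z_def)
qed

primrec walk :: "('s \<Rightarrow> 'h \<Rightarrow> 's) \<Rightarrow> 's \<Rightarrow> 'h stream \<Rightarrow> nat \<Rightarrow> 's" where
  "walk g x w 0 = x"
| "walk g x w (Suc t) = g (walk g x w t) (w !! t)"

lemma walk_Cons_Suc: "walk g x (h ## w) (Suc t) = walk g (g x h) w t"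
  by (induction t) auto

lemma measurable_walk:
  fixes g :: "'s::countable \<Rightarrow> 'h \<Rightarrow> 's"
  assumes "\<And>x. g x \<in> measurable N (count_space UNIV)"
  shows "(\<lambda>w. walk g x w t) \<in> measurable (stream_space N) (count_space UNIV)"
proof (induction t)
  case 0 then show ?case by simp
next
  case (Suc t)
  have "(\<lambda>w. (\<lambda>y w. g y (w !! t)) (walk g x w t) w) \<in> measurable (stream_space N) (count_space UNIV)"
    by (rule measurable_compose_countable[OF _ Suc])
      (rule measurable_compose[OF measurable_snth assms])
  then show ?case by simp
qed

lemma nn_integral_sum_walk_le:
  fixes g :: "'s::countable \<Rightarrow> 'h \<Rightarrow> 's" and cost F :: "'s \<Rightarrow> ennreal"
  assumes N: "prob_space N"
    and g: "\<And>x. g x \<in> measurable N (count_space UNIV)"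
    and F: "\<And>x. cost x + (\<integral>\<^sup>+h. F (g x h) \<partial>N) \<le> F x"
  shows "(\<integral>\<^sup>+w. (\<Sum>t<T. cost (walk g x w t)) \<partial>stream_space N) \<le> F x"
proof (induction T arbitrary: x)
  case 0 then show ?case by simp
next
  case (Suc T)
  interpret prob_space N by (rule N)
  interpret S: prob_space "stream_space N" by (rule prob_space_stream_space)
  have meas: "(\<lambda>w. \<Sum>t<T'. cost (walk g y w t)) \<in> borel_measurable (stream_space N)" for y T'
    by (intro borel_measurable_sum measurable_compose[OF measurable_walk[OF g]]) simp
  have "(\<integral>\<^sup>+w. (\<Sum>t<Suc T. cost (walk g x w t)) \<partial>stream_space N)
      = (\<integral>\<^sup>+h. (\<integral>\<^sup>+w. (\<Sum>t<Suc T. cost (walk g x (h ## w) t)) \<partial>stream_space N) \<partial>N)"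
    by (rule nn_integral_stream_space[OF meas])
  also have "\<dots> = (\<integral>\<^sup>+h. cost x + (\<integral>\<^sup>+w. (\<Sum>t<T. cost (walk g (g x h) w t)) \<partial>stream_space N) \<partial>N)"
    by (simp only: sum.lessThan_Suc_shift walk_Cons_Suc walk.simps(1))
      (simp add: nn_integral_add meas S.emeasure_space_1)
  also have "\<dots> \<le> (\<integral>\<^sup>+h. cost x + F (g x h) \<partial>N)"
    by (intro nn_integral_mono add_left_mono Suc.IH)
  also have "\<dots> = cost x + (\<integral>\<^sup>+h. F (g x h) \<partial>N)"
    by (simp add: nn_integral_add measurable_compose[OF g] emeasure_space_1)
  also have "\<dots> \<le> F x" by (rule F)
  finally show ?case .
qed

lemma nn_integral_suminf_walk_le:
  fixes g :: "'s::countable \<Rightarrow> 'h \<Rightarrow> 's" and cost F :: "'s \<Rightarrow> ennreal"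
  assumes N: "prob_space N"
    and g: "\<And>x. g x \<in> measurable N (count_space UNIV)"
    and F: "\<And>x. cost x + (\<integral>\<^sup>+h. F (g x h) \<partial>N) \<le> F x"
  shows "(\<integral>\<^sup>+w. (\<Sum>t. cost (walk g x w t)) \<partial>stream_space N) \<le> F x"
proof -
  have meas: "(\<lambda>w. cost (walk g x w t)) \<in> borel_measurable (stream_space N)" for t
    by (rule measurable_compose[OF measurable_walk[OF g]]) simp
  have "(\<integral>\<^sup>+w. (\<Sum>t. cost (walk g x w t)) \<partial>stream_space N)
      = (\<Sum>t. \<integral>\<^sup>+w. cost (walk g x w t) \<partial>stream_space N)"
    by (rule nn_integral_suminf[OF meas])
  also have "\<dots> = (SUP T. \<Sum>t<T. \<integral>\<^sup>+w. cost (walk g x w t) \<partial>stream_space N)"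
    by (rule suminf_eq_SUP)
  also have "\<dots> = (SUP T. \<integral>\<^sup>+w. (\<Sum>t<T. cost (walk g x w t)) \<partial>stream_space N)"
    using meas by (simp add: nn_integral_sum)
  also have "\<dots> \<le> F x"
    by (intro SUP_least nn_integral_sum_walk_le[OF N g F])
  finally show ?thesis .
qed

lemma nn_integral_uniform_measure_step3:
  fixes M t1 t2 A B C :: real
  assumes "0 < M" "0 \<le> t1" "t1 \<le> t2" "t2 \<le> M" "0 \<le> A" "0 \<le> B" "0 \<le> C"
  shows "(\<integral>\<^sup>+h. ennreal (if h \<le> t1 then A else if h \<le> t2 then B else C) \<partial>uniform_measure lborel {0..M})
     = ennreal (t1/M * A + (t2-t1)/M * B + (M-t2)/M * C)"
proof -
  let ?N = "uniform_measure lborel {0..M}"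
  have pieces: "ennreal (if h \<le> t1 then A else if h \<le> t2 then B else C)
     = ennreal A * indicator {..t1} h + ennreal B * indicator {t1<..t2} h + ennreal C * indicator {t2<..} h" for h
    using assms by (auto simp: indicator_def)
  have "{0..M} \<inter> {..t1} = {0..t1}" "{0..M} \<inter> {t1<..t2} = {t1<..t2}" "{0..M} \<inter> {t2<..} = {t2<..M}"
    using assms by auto
  then have measures: "emeasure ?N {..t1} = ennreal (t1/M)" "emeasure ?N {t1<..t2} = ennreal ((t2-t1)/M)"
      "emeasure ?N {t2<..} = ennreal ((M-t2)/M)"
    using assms by (simp_all add: divide_ennreal)
  have "(\<integral>\<^sup>+h. ennreal (if h \<le> t1 then A else if h \<le> t2 then B else C) \<partial>?N)
      = (\<integral>\<^sup>+h. ennreal A * indicator {..t1} h \<partial>?N) + (\<integral>\<^sup>+h. ennreal B * indicator {t1<..t2} h \<partial>?N)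
      + (\<integral>\<^sup>+h. ennreal C * indicator {t2<..} h \<partial>?N)"
    unfolding pieces by (subst nn_integral_add; (subst nn_integral_add)?) auto
  also have "\<dots> = ennreal A * ennreal (t1/M) + ennreal B * ennreal ((t2-t1)/M) + ennreal C * ennreal ((M-t2)/M)"
    by (subst nn_integral_cmult_indicator, simp)+ (simp add: measures)
  also have "\<dots> = ennreal (t1/M * A) + ennreal ((t2-t1)/M * B) + ennreal ((M-t2)/M * C)"
    using assms by (subst (1 2 3) ennreal_mult) (auto simp: mult.commute)
  also have "\<dots> = ennreal (t1/M * A + (t2-t1)/M * B + (M-t2)/M * C)"
    using assms by (simp add: ennreal_plus)
  finally show ?thesis .
qed

definition recip_mean_powr_sum :: "real \<Rightarrow> real \<Rightarrow> nat \<Rightarrow> nat \<Rightarrow> real" where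
  "recip_mean_powr_sum p a K j = (\<Sum>m<K. binomial_recip_mean p m j powr a)"

lemma recip_mean_powr_sum_nonneg: "0 \<le> recip_mean_powr_sum p a K j"
  unfolding recip_mean_powr_sum_def by (intro sum_nonneg) auto

lemma recip_mean_powr_sum_Suc_ge:
  assumes "0 < p" "p \<le> 1" "0 < a" "a < 1"
  shows "(1 / (real j + 1)) powr a + p * recip_mean_powr_sum p a K (Suc j)
           + (1-p) * recip_mean_powr_sum p a K j \<le> recip_mean_powr_sum p a (Suc K) j"
proof -
  have "p * recip_mean_powr_sum p a K (Suc j) + (1-p) * recip_mean_powr_sum p a K j
      = (\<Sum>m<K. p * binomial_recip_mean p m (Suc j) powr a + (1-p) * binomial_recip_mean p m j powr a)"
    by (simp add: recip_mean_powr_sum_def sum_distrib_left sum.distrib)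
  also have "\<dots> \<le> (\<Sum>m<K. binomial_recip_mean p (Suc m) j powr a)"
    unfolding binomial_recip_mean_Suc using assms
    by (intro sum_mono convex_comb_powr_le binomial_recip_mean_nonneg) auto
  finally show ?thesis
    unfolding recip_mean_powr_sum_def sum.lessThan_Suc_shift by simp
qed

lemma recip_mean_powr_sum_le:
  assumes p: "0 < p" "p \<le> 1" and a: "0 < a" "a < 1"
  shows "recip_mean_powr_sum p a L 0 \<le> (\<Sum>n<L. 1 / (real n + 1) powr a) / p"
proof -
  have "binomial_recip_mean p m 0 powr a \<le> 1 / (real m + 1) powr a / p" for m
  proof -
    have "binomial_recip_mean p m 0 powr a \<le> (1 / (p * (real m + 1))) powr a"
      using binomial_recip_mean_le[OF p, of m] binomial_recip_mean_nonneg[of p m 0] p a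
      by (intro powr_mono2) auto
    also have "\<dots> = (1/p) powr a / (real m + 1) powr a"
      using p by (simp add: powr_divide[symmetric])
    also have "(1/p) powr a \<le> (1/p) powr 1"
      using p a by (intro powr_mono) auto
    finally show ?thesis using p by (simp add: divide_right_mono mult.commute)
  qed
  then show ?thesis
    unfolding recip_mean_powr_sum_def sum_divide_distrib by (intro sum_mono)
qed

text \<open>One hash attempt on the state (blocks, stake issues); the stake of mine_state is
  (stake issues) * R.\<close>
definition mining_step :: "real \<Rightarrow> real \<Rightarrow> real \<Rightarrow> real \<Rightarrow> real \<Rightarrow> nat \<times> nat \<Rightarrow> real \<Rightarrow> nat \<times> nat" where
  "mining_step M R Dc Ds a x h =
     (let \<theta> = (R + real (snd x) * R) powr a in
      if h \<le> M * \<theta> / Dc then (Suc (fst x), if h \<le> M * \<theta> / Ds then Suc (snd x) else snd x) else x)"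

lemma mine_state_eq_walk:
  "mine_state M R Dc Ds (\<lambda>s. s powr a) w t
     = (fst (walk (mining_step M R Dc Ds a) (0,0) w t),
        real (snd (walk (mining_step M R Dc Ds a) (0,0) w t)) * R)"
  by (induction t) (simp_all add: Let_def mining_step_def distrib_right add_ac)

lemma measurable_mining_step:
  "mining_step M R Dc Ds a x \<in> measurable (uniform_measure lborel {0..M}) (count_space UNIV)"
  unfolding mining_step_def Let_def by measurable

text \<open>States with more stake issues than blocks are unreachable; the value \<top> there makes
  the potential inequality hold trivially.\<close>
definition mining_potential :: "real \<Rightarrow> real \<Rightarrow> real \<Rightarrow> nat \<Rightarrow> nat \<times> nat \<Rightarrow> ennreal" where
  "mining_potential c p a L x =
     (if fst x < snd x then \<top> else ennreal (c * recip_mean_powr_sum p a (L - fst x) (snd x)))"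

text \<open>The potential inequality at a state (n, j) with n < L, in real numbers: with
  K = L - n - 1 blocks still to go after the next one, the next attempt yields a stake block with
  probability \<theta>/D_s, a plain block with probability \<theta>/D_c - \<theta>/D_s, and nothing otherwise.\<close>
lemma mining_potential_drift:
  fixes R Dc Ds a :: real and j K :: nat
  assumes R: "0 < R" and Dc: "0 < Dc" "Dc \<le> Ds" and a: "0 < a" "a < 1"
  defines "\<theta> \<equiv> (R + real j * R) powr a" and "c \<equiv> Dc / R powr a" and "p \<equiv> Dc / Ds"
  shows "1 + \<theta>/Ds * (c * recip_mean_powr_sum p a K (Suc j))
           + (\<theta>/Dc - \<theta>/Ds) * (c * recip_mean_powr_sum p a K j)
           + (1 - \<theta>/Dc) * (c * recip_mean_powr_sum p a (Suc K) j)
         \<le> c * recip_mean_powr_sum p a (Suc K) j"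
proof -
  have p: "0 < p" "p \<le> 1" using Dc by (auto simp: p_def)
  have \<theta>: "\<theta> = R powr a * (real j + 1) powr a"
    unfolding \<theta>_def using R by (simp add: powr_mult[symmetric] algebra_simps)
  have c: "0 \<le> c" using Dc by (simp add: c_def)
  have "c * (1 / (real j + 1)) powr a = Dc / \<theta>"
    using R by (simp add: \<theta> c_def powr_divide)
  moreover have "c * ((1 / (real j + 1)) powr a + p * recip_mean_powr_sum p a K (Suc j)
      + (1-p) * recip_mean_powr_sum p a K j) \<le> c * recip_mean_powr_sum p a (Suc K) j"
    by (rule mult_left_mono[OF recip_mean_powr_sum_Suc_ge[OF p a] c])
  ultimately have "Dc / \<theta> + p * (c * recip_mean_powr_sum p a K (Suc j))
      + (1-p) * (c * recip_mean_powr_sum p a K j) \<le> c * recip_mean_powr_sum p a (Suc K) j"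
    by (simp add: algebra_simps)
  from mult_left_mono[OF this, of "\<theta>/Dc"]
  have "\<theta>/Dc * (Dc / \<theta> + p * (c * recip_mean_powr_sum p a K (Suc j))
      + (1-p) * (c * recip_mean_powr_sum p a K j)) \<le> \<theta>/Dc * (c * recip_mean_powr_sum p a (Suc K) j)"
    using Dc R by (simp add: \<theta>)
  also have "\<theta>/Dc * (Dc / \<theta> + p * X + (1-p) * Y) = 1 + \<theta>/Ds * X + (\<theta>/Dc - \<theta>/Ds) * Y" for X Y
    using Dc R by (simp add: \<theta> p_def field_simps)
  finally show ?thesis by (simp add: algebra_simps)
qed

lemma mining_potential_step:
  fixes M R Dc Ds a :: real and L :: nat
  assumes M: "0 < M" and R: "0 < R" and Dc: "0 < Dc" "Dc \<le> Ds" and a: "0 < a" "a < 1"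
    and \<theta>: "\<forall>k<L. 0 < (R + real k * R) powr a \<and> (R + real k * R) powr a \<le> Dc"
  defines "F \<equiv> mining_potential (Dc / R powr a) (Dc / Ds) a L"
  shows "(if fst x < L then 1 else 0)
           + (\<integral>\<^sup>+h. F (mining_step M R Dc Ds a x h) \<partial>uniform_measure lborel {0..M}) \<le> F x"
proof (cases x)
  case (Pair n j)
  define c where "c = Dc / R powr a"
  define p where "p = Dc / Ds"
  consider "n < j" | "j \<le> n" "L \<le> n" | "j \<le> n" "n < L" by linarith
  then show ?thesis
  proof cases
    case 1 then show ?thesis by (simp add: Pair F_def mining_potential_def)
  next
    case 2
    then have "F (mining_step M R Dc Ds a x h) = 0" for h
      by (auto simp: Pair F_def mining_potential_def mining_step_def Let_def recip_mean_powr_sum_def)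
    then show ?thesis using 2 by (simp add: Pair)
  next
    case 3
    define \<theta> where "\<theta> = (R + real j * R) powr a"
    define K where "K = L - Suc n"
    define FA where "FA = c * recip_mean_powr_sum p a K (Suc j)"
    define FB where "FB = c * recip_mean_powr_sum p a K j"
    define FC where "FC = c * recip_mean_powr_sum p a (Suc K) j"
    have "0 \<le> c" using Dc by (simp add: c_def)
    then have F_nonneg: "0 \<le> FA" "0 \<le> FB" "0 \<le> FC"
      by (simp_all add: FA_def FB_def FC_def recip_mean_powr_sum_nonneg)
    have \<theta>_bounds: "0 < \<theta>" "\<theta> \<le> Dc" using \<theta> 3 by (auto simp: \<theta>_def)
    then have t: "0 \<le> M * \<theta> / Ds" "M * \<theta> / Ds \<le> M * \<theta> / Dc" "M * \<theta> / Dc \<le> M"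
      using M Dc by (auto simp: field_simps intro: mult_left_mono)
    have LK: "L - n = Suc K" using 3 by (simp add: K_def)
    have next_potential: "F (mining_step M R Dc Ds a x h)
        = ennreal (if h \<le> M * \<theta> / Ds then FA else if h \<le> M * \<theta> / Dc then FB else FC)" for h
      using 3 LK t by (auto simp: Pair F_def mining_potential_def mining_step_def \<theta>_def c_def p_def
          FA_def FB_def FC_def K_def)
    have "(M * \<theta> / Ds) / M = \<theta>/Ds" "(M * \<theta> / Dc - M * \<theta> / Ds) / M = \<theta>/Dc - \<theta>/Ds"
      "(M - M * \<theta> / Dc) / M = 1 - \<theta>/Dc"
      using M by (auto simp: field_simps)
    then have integral: "(\<integral>\<^sup>+h. F (mining_step M R Dc Ds a x h) \<partial>uniform_measure lborel {0..M})
        = ennreal (\<theta>/Ds * FA + (\<theta>/Dc - \<theta>/Ds) * FB + (1 - \<theta>/Dc) * FC)"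
      using nn_integral_uniform_measure_step3[OF M t F_nonneg] by (simp only: next_potential)
    have drift: "1 + (\<theta>/Ds * FA + (\<theta>/Dc - \<theta>/Ds) * FB + (1 - \<theta>/Dc) * FC) \<le> FC"
      using mining_potential_drift[OF R Dc a, of j K]
      by (simp add: \<theta>_def FA_def FB_def FC_def c_def p_def add.assoc)
    have "0 \<le> \<theta>/Ds * FA + (\<theta>/Dc - \<theta>/Ds) * FB + (1 - \<theta>/Dc) * FC"
      using \<theta>_bounds Dc F_nonneg
      by (intro add_nonneg_nonneg mult_nonneg_nonneg) (auto simp: field_simps intro: divide_left_mono)
    then have "(if fst x < L then 1 else 0)
          + (\<integral>\<^sup>+h. F (mining_step M R Dc Ds a x h) \<partial>uniform_measure lborel {0..M})
        = ennreal (1 + (\<theta>/Ds * FA + (\<theta>/Dc - \<theta>/Ds) * FB + (1 - \<theta>/Dc) * FC))"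
      using 3 unfolding integral by (simp add: Pair ennreal_plus)
    also have "\<dots> \<le> ennreal FC"
      using drift by (rule ennreal_leI)
    also have "\<dots> = F x"
      using 3 LK by (simp add: Pair F_def mining_potential_def FC_def c_def p_def)
    finally show ?thesis .
  qed
qed

theorem mainTheorem4:
  fixes M R Dc Ds a :: real and L :: nat
  assumes "M > 0" and "R > 0" and "0 < Dc" and "Dc \<le> Ds"
    and "0 < a" and "a < 1" and "L \<ge> 1"
    and "\<forall>k<L. 0 < (R + real k * R) powr a \<and> (R + real k * R) powr a \<le> Dc"
  shows "(\<integral>\<^sup>+ w. mining_time M R Dc Ds (\<lambda>s. s powr a) L w \<partial>hash_space M)
           \<le> ennreal (Ds / R powr a * (\<Sum>n<L. 1 / (real n + 1) powr a))"
proof -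
  let ?N = "uniform_measure lborel {0..M}"
  let ?walk = "walk (mining_step M R Dc Ds a) (0, 0)"
  have N: "prob_space ?N" using assms(1) by (intro prob_space_uniform_measure) auto
  have "(\<integral>\<^sup>+ w. mining_time M R Dc Ds (\<lambda>s. s powr a) L w \<partial>hash_space M)
      = (\<integral>\<^sup>+ w. (\<Sum>t. if fst (?walk w t) < L then 1 else 0) \<partial>stream_space ?N)"
    by (simp add: hash_space_def mining_time_def mine_state_eq_walk nn_integral_count_space_nat)
  also have "\<dots> \<le> mining_potential (Dc / R powr a) (Dc / Ds) a L (0, 0)"
    by (rule nn_integral_suminf_walk_le[OF N measurable_mining_step mining_potential_step])
      (use assms in auto)
  also have "\<dots> = ennreal (Dc / R powr a * recip_mean_powr_sum (Dc / Ds) a L 0)"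
    by (simp add: mining_potential_def)
  also have "\<dots> \<le> ennreal (Dc / R powr a * ((\<Sum>n<L. 1 / (real n + 1) powr a) / (Dc / Ds)))"
    using assms by (intro ennreal_leI mult_left_mono recip_mean_powr_sum_le) auto
  also have "\<dots> = ennreal (Ds / R powr a * (\<Sum>n<L. 1 / (real n + 1) powr a))"
    using assms by (simp add: mult.commute)
  finally show ?thesis .
qed

end
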